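(* Let $n>5$ and let $S\in\mathcal D_n^s$ be such that one of its directed cycles has even length and the other has odd length. Then: (i) if $n$ is odd, the maximal energy among such $S$ is attained by $S\cong D_n^s[2,n-2]$ (a positive $2$-cycle and a positive $(n-2)$-cycle); (ii) the minimal energy among such $S$ is attained by $S\cong D_n^s[\boldsymbol 2,3]$ (a negative $2$-cycle and a positive $3$-cycle).
   Context: A signed digraph (sidigraph) is a digraph in which every arc carries a sign $+1$ or $-1$; its adjacency matrix $A(S)=[a_{ij}]$ has $a_{ij}$ equal to the sign of the arc $w_iw_j$ if it exists and $0$ otherwise. If $\rho_1,\dots,\rho_n$ are the eigenvalues of $A(S)$, the energy of $S$ is $E(S)=\sum_{k=1}^n|\mathrm{Re}(\rho_k)|$. The sign of a directed cycle is the product of the signs of its arcs. For $k\ge 2$, $C_k$ denotes a directed cycle of length $k$ with sign $+1$ and $\boldsymbol{C}_k$ a directed cycle of length $k$ with sign $-1$. It is known that $E(C_k)=2\cot\frac{\pi}{k}$ if $k\equiv0\pmod 4$, $2\csc\frac{\pi}{k}$ if $k\equiv 2\pmod 4$, $\csc\frac{\pi}{2k}$ if $k$ is odd; and $E(\boldsymbol C_k)=2\csc\frac{\pi}{k}$ if $k\equiv0\pmod 4$, $2\cot\frac{\pi}{k}$ if $k\equiv 2\pmod 4$, $\csc\frac{\pi}{2k}$ if $k$ is odd. $\mathcal D_n^s$ is the class of sidigraphs on $n$ vertices whose underlying graph is connected and which contain exactly two directed cycles, these two cycles being vertex-disjoint. The energy of $S\in\mathcal D_n^s$ equals the sum of the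 energies of its two directed cycles. For integers $p,q\ge 2$ with $p+q\le n$, $D_n^s[p,q]$ and $D_n^s[\boldsymbol p,q]$ denote members of $\mathcal D_n^s$ whose two directed cycles are $C_p,C_q$, respectively $\boldsymbol C_p, C_q$. *)

theory Defs
  imports "Jordan_Normal_Form.Char_Poly"
begin

text \<open>A signed digraph (sidigraph) on the vertex set {0..<n} is given by its
adjacency function A: A i j is the sign (+1 or -1) of the arc from i to j if it
exists, and 0 otherwise.\<close>

definition sidigraph :: "nat \<Rightarrow> (nat \<Rightarrow> nat \<Rightarrow> int) \<Rightarrow> bool" where
  "sidigraph n A \<longleftrightarrow>
     (\<forall>i j. A i j \<in> {-1, 0, 1}) \<and>
     (\<forall>i j. A i j \<noteq> 0 \<longrightarrow> i < n \<and> j < n \<and> i \<noteq> j)"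

definition adj_mat :: "nat \<Rightarrow> (nat \<Rightarrow> nat \<Rightarrow> int) \<Rightarrow> complex mat" where
  "adj_mat n A = mat n n (\<lambda>(i, j). complex_of_int (A i j))"

definition energy :: "nat \<Rightarrow> (nat \<Rightarrow> nat \<Rightarrow> int) \<Rightarrow> real" where
  "energy n A =
     (\<Sum>z\<in>{z. poly (char_poly (adj_mat n A)) z = 0}.
        real (order z (char_poly (adj_mat n A))) * \<bar>Re z\<bar>)"

definition underlying_connected :: "nat \<Rightarrow> (nat \<Rightarrow> nat \<Rightarrow> int) \<Rightarrow> bool" where
  "underlying_connected n A \<longleftrightarrow>
     (\<forall>i<n. \<forall>j<n. (i, j) \<in> {(u, v). A u v \<noteq> 0 \<or> A v u \<noteq> 0}\<^sup>*)"

text \<open>A directed cycle given as a list of distinct vertices v_0,...,v_{k-1}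
(k \<ge> 2) with arcs v_i v_{i+1 mod k}; the cycle itself is its set of arcs.\<close>
definition cycle_list :: "(nat \<Rightarrow> nat \<Rightarrow> int) \<Rightarrow> nat list \<Rightarrow> bool" where
  "cycle_list A vs \<longleftrightarrow> length vs \<ge> 2 \<and> distinct vs \<and>
     (\<forall>i<length vs. A (vs ! i) (vs ! ((i + 1) mod length vs)) \<noteq> 0)"

definition cycle_arcs :: "nat list \<Rightarrow> (nat \<times> nat) set" where
  "cycle_arcs vs = {(vs ! i, vs ! ((i + 1) mod length vs)) | i. i < length vs}"

definition dcycles :: "(nat \<Rightarrow> nat \<Rightarrow> int) \<Rightarrow> (nat \<times> nat) set set" where
  "dcycles A = {cycle_arcs vs | vs. cycle_list A vs}"

definition cycle_len :: "(nat \<times> nat) set \<Rightarrow> nat" where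
  "cycle_len c = card c"

definition cycle_verts :: "(nat \<times> nat) set \<Rightarrow> nat set" where
  "cycle_verts c = fst ` c"

definition cycle_sign :: "(nat \<Rightarrow> nat \<Rightarrow> int) \<Rightarrow> (nat \<times> nat) set \<Rightarrow> int" where
  "cycle_sign A c = (\<Prod>(i, j)\<in>c. A i j)"

definition in_Dns :: "nat \<Rightarrow> (nat \<Rightarrow> nat \<Rightarrow> int) \<Rightarrow> bool" where
  "in_Dns n A \<longleftrightarrow> sidigraph n A \<and> underlying_connected n A \<and>
     card (dcycles A) = 2 \<and>
     (\<forall>c1\<in>dcycles A. \<forall>c2\<in>dcycles A. c1 \<noteq> c2 \<longrightarrow> cycle_verts c1 \<inter> cycle_verts c2 = {})"

text \<open>Members of D_n^s whose two directed cycles have length p and sign sp,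
resp. length q and sign sq (e.g. D_n^s[p,q] : sp = sq = 1;
D_n^s[bold p, q] : sp = -1, sq = 1).\<close>
definition Dns_pq :: "nat \<Rightarrow> int \<Rightarrow> nat \<Rightarrow> int \<Rightarrow> nat \<Rightarrow> (nat \<Rightarrow> nat \<Rightarrow> int) \<Rightarrow> bool" where
  "Dns_pq n sp p sq q A \<longleftrightarrow> in_Dns n A \<and>
     (\<exists>c1\<in>dcycles A. \<exists>c2\<in>dcycles A. c1 \<noteq> c2 \<and>
        cycle_len c1 = p \<and> cycle_sign A c1 = sp \<and>
        cycle_len c2 = q \<and> cycle_sign A c2 = sq)"

definition Dns_even_odd :: "nat \<Rightarrow> (nat \<Rightarrow> nat \<Rightarrow> int) \<Rightarrow> bool" where
  "Dns_even_odd n A \<longleftrightarrow> in_Dns n A \<and>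
     (\<exists>c1\<in>dcycles A. \<exists>c2\<in>dcycles A. even (cycle_len c1) \<and> odd (cycle_len c2))"

end

theory Submission
  imports Defs "HOL-Combinatorics.Cycles" "HOL-Analysis.Complex_Transcendental"
begin

text \<open>
  In the permutation expansion of the characteristic polynomial of \<open>S\<close> only the permutations
  made of the two directed cycles survive, so it equals \<open>x^(n-p-q) (x^p - \<sigma>\<^sub>1) (x^q - \<sigma>\<^sub>2)\<close>,
  where \<open>p, q\<close> are the cycle lengths and \<open>\<sigma>\<^sub>1, \<sigma>\<^sub>2\<close> their signs. Hence \<open>E(S)\<close> is the sum of
  \<open>|Re z|\<close> over the \<open>p\<close>-th roots of \<open>\<sigma>\<^sub>1\<close> and the \<open>q\<close>-th roots of \<open>\<sigma>\<^sub>2\<close>. These roots are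
  equally spaced on the unit circle, and a telescoping sum of cosines gives \<open>csc (\<pi>/2q)\<close> for odd
  \<open>q\<close> and at most \<open>2 csc (\<pi>/p)\<close> for even \<open>p\<close>, with the values \<open>2\<close> and \<open>0\<close> for the positive and
  the negative \<open>2\<close>-cycle. For the maximum, \<open>p = 2\<close> reduces to the monotonicity of \<open>csc (\<pi>/2q)\<close>
  in \<open>q\<close>, while \<open>p \<ge> 4\<close> loses against it by \<open>1/y \<le> csc y \<le> 1/y + 1/5\<close>; the minimum is
  \<open>E(S) \<ge> csc (\<pi>/6) = 2\<close>.
\<close>

section \<open>Sums of absolute values of equally spaced cosines\<close>

lemma sum_cos_arith_progression:
  "2 * sin d * (\<Sum>j<m. cos (t + real j * (2*d))) = sin (t + (2*real m - 1) * d) - sin (t - d)"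
proof (induction m)
  case 0
  then show ?case by simp
next
  case (Suc m)
  have telescope: "2 * sin d * cos (t + real m * (2*d))
      = sin (t + (2*real (Suc m) - 1) * d) - sin (t + (2*real m - 1) * d)"
    by (simp add: sin_add sin_diff algebra_simps)
  show ?case
    using Suc telescope by (simp add: algebra_simps)
qed

lemma sum_lessThan_add:
  "(\<Sum>j<m+n. f j) = (\<Sum>j<m. f j) + (\<Sum>j<n. f (m + j))" for f :: "nat \<Rightarrow> 'a::comm_monoid_add"
  by (induct n) (simp_all add: ac_simps)

definition abs_cos_sum :: "real \<Rightarrow> nat \<Rightarrow> real" where
  "abs_cos_sum \<phi> m = (\<Sum>j<m. \<bar>cos (\<phi> + real j * pi / real m)\<bar>)"

lemma abs_cos_sum_shift:
  assumes "m > 0"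
  shows "abs_cos_sum (\<phi> + pi / real m) m = abs_cos_sum \<phi> m"
proof -
  define f where "f j = \<bar>cos (\<phi> + real j * pi / real m)\<bar>" for j :: nat
  have "abs_cos_sum (\<phi> + pi / real m) m = (\<Sum>j<m. f (Suc j))"
    unfolding abs_cos_sum_def f_def by (simp add: ring_distribs add_divide_distrib add.assoc)
  also have "\<dots> = (\<Sum>j<m. f j)"
    using sum.lessThan_Suc_shift[of f m] sum.lessThan_Suc[of f m] assms by (simp add: f_def)
  finally show ?thesis
    by (simp add: abs_cos_sum_def f_def)
qed

lemma abs_cos_sum_shift_nat:
  assumes "m > 0"
  shows "abs_cos_sum (\<phi> + real k * pi / real m) m = abs_cos_sum \<phi> m"
proof (induction k)
  case 0
  then show ?case by simp
next
  case (Suc k)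
  have "\<phi> + real (Suc k) * pi / real m = (\<phi> + real k * pi / real m) + pi / real m"
    by (simp add: ring_distribs add_divide_distrib)
  then show ?case
    using Suc abs_cos_sum_shift[OF assms, of "\<phi> + real k * pi / real m"] by (simp only:)
qed

lemma abs_cos_sum_shift_int:
  assumes "m > 0"
  shows "abs_cos_sum (\<phi> + real_of_int k * pi / real m) m = abs_cos_sum \<phi> m"
proof (cases "k \<ge> 0")
  case True
  then show ?thesis
    using abs_cos_sum_shift_nat[OF assms, of \<phi> "nat k"] by simp
next
  case False
  then have cancel: "\<phi> + real_of_int k * pi / real m + real (nat (-k)) * pi / real m = \<phi>"
    by (simp add: divide_simps)
  show ?thesis
    using abs_cos_sum_shift_nat[OF assms, of "\<phi> + real_of_int k * pi / real m" "nat (-k)"]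
    unfolding cancel by simp
qed

text \<open>On a window of length \<open>\<pi>/m\<close> starting at \<open>-\<pi>/2\<close> all cosines in the sum are nonnegative, so the
  sum telescopes.\<close>

lemma abs_cos_sum_window:
  assumes m: "m > 0" and lower: "- (pi/2) \<le> \<psi>" and upper: "\<psi> < - (pi/2) + pi / real m"
  shows "abs_cos_sum \<psi> m = sin (pi / (2 * real m) - \<psi>) / sin (pi / (2 * real m))"
proof -
  define d where "d = pi / (2 * real m)"
  have "sin d > 0"
    using m by (intro sin_gt_zero) (auto simp: d_def divide_simps)
  have cos_nonneg: "cos (\<psi> + real j * pi / real m) \<ge> 0" if "j < m" for j
  proof (rule cos_ge_zero)
    show "- (pi / 2) \<le> \<psi> + real j * pi / real m"
      using lower by (simp add: add_increasing2)
    have "real j \<le> real m - 1"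
      using that by linarith
    then have "real j * pi / real m \<le> (real m - 1) * pi / real m"
      using m by (simp add: divide_right_mono)
    also have "\<dots> = pi - pi / real m"
      using m by (simp add: divide_simps algebra_simps)
    finally show "\<psi> + real j * pi / real m \<le> pi / 2"
      using upper by linarith
  qed
  have step: "real j * (2*d) = real j * pi / real m" for j
    using m by (simp add: d_def)
  have "abs_cos_sum \<psi> m = (\<Sum>j<m. cos (\<psi> + real j * (2*d)))"
    unfolding abs_cos_sum_def step using cos_nonneg by (intro sum.cong) auto
  moreover have "\<psi> + (2*real m - 1) * d = (\<psi> - d) + pi"
    using m by (simp add: d_def field_simps)
  ultimately have "2 * sin d * abs_cos_sum \<psi> m = 2 * sin (d - \<psi>)"
    using sum_cos_arith_progression[where d = d and m = m and t = \<psi>] by (simp add: sin_add sin_diff)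
  with \<open>sin d > 0\<close> show ?thesis
    by (simp add: d_def field_simps)
qed

lemma abs_cos_sum_le_csc:
  assumes m: "m > 0"
  shows "abs_cos_sum \<phi> m \<le> 1 / sin (pi / (2 * real m))"
proof -
  define h where "h = pi / real m"
  have "h > 0"
    using m by (simp add: h_def)
  define k where "k = \<lfloor>(\<phi> + pi/2) / h\<rfloor>"
  define \<psi> where "\<psi> = \<phi> - real_of_int k * h"
  have "real_of_int k * h \<le> \<phi> + pi/2" "\<phi> + pi/2 < real_of_int k * h + h"
    using floor_divide_lower[OF \<open>h > 0\<close>] floor_divide_upper[OF \<open>h > 0\<close>, of "\<phi> + pi/2"]
    unfolding k_def by (auto simp: distrib_right)
  then have lower: "- (pi/2) \<le> \<psi>" and upper: "\<psi> < - (pi/2) + pi / real m"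
    unfolding \<psi>_def h_def by auto
  have "sin (pi / (2 * real m)) > 0"
    using m by (intro sin_gt_zero) (simp_all add: divide_simps)
  have "abs_cos_sum \<phi> m = abs_cos_sum \<psi> m"
    using abs_cos_sum_shift_int[OF m, of \<psi> k] by (simp add: \<psi>_def h_def)
  also have "\<dots> = sin (pi / (2 * real m) - \<psi>) / sin (pi / (2 * real m))"
    by (rule abs_cos_sum_window[OF m lower upper])
  also have "\<dots> \<le> 1 / sin (pi / (2 * real m))"
    using \<open>sin (pi / (2 * real m)) > 0\<close> by (simp add: divide_right_mono)
  finally show ?thesis .
qed

lemma abs_cos_sum_odd_zero:
  assumes m: "odd m"
  shows "abs_cos_sum 0 m = 1 / sin (pi / (2 * real m))"
proof -
  have "m > 0"
    using m by (cases m) auto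
  define k where "k = (m - 1) div 2"
  have "m = 2 * k + 1"
    using m by (simp add: k_def)
  then have "real m = 2 * real k + 1"
    by simp
  then have \<psi>: "- (real k * pi / real m) = - (pi/2) + pi / (2 * real m)"
    using \<open>m > 0\<close> by (simp add: field_simps)
  have "abs_cos_sum 0 m = abs_cos_sum (- (real k * pi / real m)) m"
    using abs_cos_sum_shift_nat[OF \<open>m > 0\<close>, of "- (real k * pi / real m)" k] by simp
  also have "\<dots> = sin (pi / (2 * real m) - (- (real k * pi / real m))) / sin (pi / (2 * real m))"
    using \<open>m > 0\<close> unfolding \<psi> by (intro abs_cos_sum_window) (simp_all add: divide_simps)
  also have "sin (pi / (2 * real m) - (- (real k * pi / real m))) = 1"
    unfolding \<psi> by simp
  finally show ?thesis .
qed

section \<open>Energy of a single directed cycle\<close>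

text \<open>A directed \<open>k\<close>-cycle of sign \<open>s\<close> has characteristic polynomial \<open>x\<^sup>k - s\<close>, whose roots are simple,
  so this is its energy.\<close>

definition cycle_energy :: "nat \<Rightarrow> complex \<Rightarrow> real" where
  "cycle_energy k s = (\<Sum>z\<in>{z. z ^ k = s}. \<bar>Re z\<bar>)"

lemma cycle_energy_nonneg: "0 \<le> cycle_energy k s"
  unfolding cycle_energy_def by (rule sum_nonneg) simp

lemma cycle_energy_one:
  assumes "k > 0"
  shows "cycle_energy k 1 = (\<Sum>j<k. \<bar>cos (2 * pi * real j / real k)\<bar>)"
  unfolding cycle_energy_def
  using sum.reindex_bij_betw[OF Complex.bij_betw_roots_unity[OF assms], of "\<lambda>z. \<bar>Re z\<bar>"] by simp

lemma cycle_energy_minus_one: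
  assumes k: "k > 0"
  shows "cycle_energy k (-1) = (\<Sum>j<k. \<bar>cos (pi / real k + 2 * pi * real j / real k)\<bar>)"
proof -
  define c where "c = cis (pi / real k)"
  have "c ^ k = cis (real k * (pi / real k))"
    unfolding c_def by (rule Complex.DeMoivre)
  then have "c ^ k = -1"
    using k by simp
  have "bij_betw (\<lambda>z. c * z) {z. z ^ k = 1} {z. z ^ k = -1}"
    by (rule bij_betw_byWitness[where f'="\<lambda>z. z / c"])
      (use \<open>c ^ k = -1\<close> in \<open>auto simp: c_def power_mult_distrib power_divide\<close>)
  then have "bij_betw ((\<lambda>z. c * z) \<circ> (\<lambda>j. cis (2 * pi * real j / real k))) {..<k} {z. z ^ k = -1}"
    by (rule bij_betw_trans[OF Complex.bij_betw_roots_unity[OF k]])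
  then have "cycle_energy k (-1) = (\<Sum>j<k. \<bar>Re (c * cis (2 * pi * real j / real k))\<bar>)"
    unfolding cycle_energy_def using sum.reindex_bij_betw[of _ _ _ "\<lambda>z. \<bar>Re z\<bar>"] by fastforce
  then show ?thesis
    by (simp add: c_def cis_mult)
qed

lemma sum_abs_cos_even:
  assumes m: "m > 0"
  shows "(\<Sum>j<2*m. \<bar>cos (\<phi> + 2 * pi * real j / real (2*m))\<bar>) = 2 * abs_cos_sum \<phi> m"
proof -
  have second_half: "(\<Sum>j<m. \<bar>cos (\<phi> + real (m+j) * pi / real m)\<bar>) = abs_cos_sum \<phi> m"
    unfolding abs_cos_sum_def
  proof (rule sum.cong[OF refl])
    fix j
    have "\<phi> + real (m+j) * pi / real m = (\<phi> + real j * pi / real m) + pi"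
      using m by (simp add: field_simps)
    then show "\<bar>cos (\<phi> + real (m+j) * pi / real m)\<bar> = \<bar>cos (\<phi> + real j * pi / real m)\<bar>"
      by (simp add: cos_add)
  qed
  have "(\<Sum>j<2*m. \<bar>cos (\<phi> + 2 * pi * real j / real (2*m))\<bar>)
      = (\<Sum>j<m+m. \<bar>cos (\<phi> + real j * pi / real m)\<bar>)"
    by (simp add: mult_2 [symmetric] mult.commute)
  also have "\<dots> = abs_cos_sum \<phi> m + (\<Sum>j<m. \<bar>cos (\<phi> + real (m+j) * pi / real m)\<bar>)"
    unfolding sum_lessThan_add abs_cos_sum_def ..
  finally show ?thesis
    using second_half by simp
qed

lemma cycle_energy_even_one: "m > 0 \<Longrightarrow> cycle_energy (2*m) 1 = 2 * abs_cos_sum 0 m"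
  using cycle_energy_one[of "2*m"] sum_abs_cos_even[of m 0] by simp

lemma cycle_energy_even_minus_one:
  "m > 0 \<Longrightarrow> cycle_energy (2*m) (-1) = 2 * abs_cos_sum (pi / real (2*m)) m"
  using cycle_energy_minus_one[of "2*m"] sum_abs_cos_even[of m "pi / real (2*m)"] by simp

lemma cycle_energy_even_le:
  assumes "even p" "p \<ge> 2" "s \<in> {1, -1}"
  shows "cycle_energy p s \<le> 2 / sin (pi / real p)"
proof -
  obtain m where p: "p = 2 * m" and "m > 0"
    using assms(1,2) by auto
  show ?thesis
    using assms(3) cycle_energy_even_one[OF \<open>m > 0\<close>] cycle_energy_even_minus_one[OF \<open>m > 0\<close>]
      abs_cos_sum_le_csc[OF \<open>m > 0\<close>, of 0] abs_cos_sum_le_csc[OF \<open>m > 0\<close>, of "pi / real (2*m)"]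
    unfolding p by auto
qed

lemma cycle_energy_two_one: "cycle_energy 2 1 = 2"
  using cycle_energy_even_one[of 1] by (simp add: abs_cos_sum_def)

lemma cycle_energy_two_minus_one: "cycle_energy 2 (-1) = 0"
  using cycle_energy_even_minus_one[of 1] by (simp add: abs_cos_sum_def)

lemma cycle_energy_odd_minus_one:
  assumes "odd q"
  shows "cycle_energy q (-1) = cycle_energy q 1"
proof -
  have "bij_betw uminus {z::complex. z ^ q = 1} {z. z ^ q = -1}"
    by (rule bij_betw_byWitness[where f'=uminus]) (use assms in auto)
  then show ?thesis
    unfolding cycle_energy_def using sum.reindex_bij_betw[of uminus _ _ "\<lambda>z. \<bar>Re z\<bar>"] by simp
qed

lemma cycle_energy_double_one:
  assumes "q > 0"
  shows "cycle_energy (2*q) 1 = cycle_energy q 1 + cycle_energy q (-1)"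
proof -
  have split: "{z::complex. z ^ (2*q) = 1} = {z. z ^ q = 1} \<union> {z. z ^ q = -1}"
    by (auto simp: power_mult power2_eq_1_iff mult.commute[of 2 q])
  have "finite {z::complex. z ^ (2*q) = 1}"
    using assms by (intro finite_roots_unity) simp
  then show ?thesis
    unfolding cycle_energy_def split by (intro sum.union_disjoint) auto
qed

lemma cycle_energy_odd:
  assumes q: "odd q" and s: "s \<in> {1, -1}"
  shows "cycle_energy q s = 1 / sin (pi / (2 * real q))"
proof -
  have "q > 0"
    using q by (cases q) auto
  have "2 * cycle_energy q 1 = cycle_energy (2*q) 1"
    using cycle_energy_double_one[OF \<open>q > 0\<close>] cycle_energy_odd_minus_one[OF q] by simp
  also have "\<dots> = 2 / sin (pi / (2 * real q))"
    using cycle_energy_even_one[OF \<open>q > 0\<close>] abs_cos_sum_odd_zero[OF q] by simp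
  finally show ?thesis
    using s cycle_energy_odd_minus_one[OF q] by auto
qed

lemma cycle_energy_three: "s \<in> {1, -1} \<Longrightarrow> cycle_energy 3 s = 2"
  using cycle_energy_odd[of 3 s] by (simp add: sin_30)

definition root_energy :: "complex poly \<Rightarrow> real" where
  "root_energy P = (\<Sum>z\<in>{z. poly P z = 0}. real (order z P) * \<bar>Re z\<bar>)"

lemma energy_eq_root_energy: "energy n A = root_energy (char_poly (adj_mat n A))"
  unfolding energy_def root_energy_def ..

lemma root_energy_superset:
  assumes "P \<noteq> 0" "finite S" "{z. poly P z = 0} \<subseteq> S"
  shows "root_energy P = (\<Sum>z\<in>S. real (order z P) * \<bar>Re z\<bar>)"
  unfolding root_energy_def using assms by (intro sum.mono_neutral_left) (auto simp: order_0I)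

lemma root_energy_mult:
  assumes P: "P \<noteq> 0" and Q: "Q \<noteq> 0"
  shows "root_energy (P * Q) = root_energy P + root_energy Q"
proof -
  define S where "S = {z. poly (P * Q) z = 0}"
  have "P * Q \<noteq> 0"
    using P Q by simp
  then have "finite S"
    unfolding S_def by (rule poly_roots_finite)
  have "root_energy (P * Q) = (\<Sum>z\<in>S. real (order z P) * \<bar>Re z\<bar> + real (order z Q) * \<bar>Re z\<bar>)"
    unfolding root_energy_def S_def using order_mult[OF \<open>P * Q \<noteq> 0\<close>]
    by (intro sum.cong) (auto simp: algebra_simps)
  moreover have "root_energy P = (\<Sum>z\<in>S. real (order z P) * \<bar>Re z\<bar>)"
    "root_energy Q = (\<Sum>z\<in>S. real (order z Q) * \<bar>Re z\<bar>)"
    using P Q \<open>finite S\<close> by (auto simp: S_def intro!: root_energy_superset)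
  ultimately show ?thesis
    by (simp add: sum.distrib)
qed

lemma root_energy_monom: "root_energy (monom 1 a) = 0"
  unfolding root_energy_def by (rule sum.neutral) (auto simp: poly_monom)

lemma binomial_poly_nonzero: "k > 0 \<Longrightarrow> monom (1::complex) k - [:s:] \<noteq> 0"
  by (metis coeff_diff coeff_monom coeff_pCons_0 diff_zero one_neq_zero
      coeff_0 monom_eq_const_iff coeff_pCons_Suc gr0_conv_Suc)

lemma root_energy_binomial:
  assumes k: "k > 0" and s: "s \<noteq> 0"
  shows "root_energy (monom 1 k - [:s:]) = cycle_energy k s"
proof -
  define P where "P = monom 1 k - [:s:]"
  have poly_P: "poly P z = z ^ k - s" for z
    unfolding P_def by (simp add: poly_monom)
  have "P \<noteq> 0"
    unfolding P_def by (rule binomial_poly_nonzero[OF k])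
  have simple: "order z P = 1" if "z ^ k = s" for z
  proof -
    have "z \<noteq> 0"
      using that s k by (auto simp: zero_power)
    have "pderiv P = monom (of_nat k) (k - 1)"
      unfolding P_def by (simp add: pderiv_diff pderiv_monom pderiv_pCons)
    then have "order z (pderiv P) = 0"
      using \<open>z \<noteq> 0\<close> k by (intro order_0I) (simp add: poly_monom)
    moreover have "order z P = Suc (order z (pderiv P))"
      by (rule order_pderiv[OF \<open>P \<noteq> 0\<close>]) (simp add: poly_P that)
    ultimately show ?thesis
      by simp
  qed
  show ?thesis
    unfolding P_def[symmetric] root_energy_def cycle_energy_def poly_P
    by (intro sum.cong) (auto simp: simple)
qed

lemma root_energy_monom_binomials:
  assumes "p > 0" "q > 0" "s1 \<noteq> 0" "s2 \<noteq> 0"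
  shows "root_energy (monom 1 a * (monom 1 p - [:s1:]) * (monom 1 q - [:s2:]))
    = cycle_energy p s1 + cycle_energy q s2"
  using assms binomial_poly_nonzero[of p s1] binomial_poly_nonzero[of q s2]
  by (simp add: root_energy_mult root_energy_monom root_energy_binomial)

lemma sin_ge_taylor: fixes y :: real assumes "0 \<le> y" shows "y - y^3/6 - y^4/24 \<le> sin y"
proof -
  have "\<bar>sin y - (\<Sum>m<4. sin_coeff m * y ^ m)\<bar> \<le> inverse (fact 4) * \<bar>y\<bar> ^ 4"
    by (rule Maclaurin_sin_bound)
  moreover have "(\<Sum>m<4. sin_coeff m * y ^ m) = y - y^3/6"
    by (simp add: lessThan_nat_numeral sin_coeff_def fact_numeral)
  moreover have "inverse (fact 4) * \<bar>y\<bar> ^ 4 = y^4/24"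
    using assms by (simp add: fact_numeral)
  ultimately show ?thesis
    by linarith
qed

lemma csc_le_inverse_plus:
  assumes y0: "0 < y" and y1: "y \<le> pi / 4"
  shows "1 / sin y \<le> 1 / y + 1/5"
proof -
  have "pi \<le> 63/20"
    using pi_approx by simp
  then have "y \<le> 79/100"
    using y1 by linarith
  then have "y^2 \<le> (79/100)^2" "y^3 \<le> (79/100)^3"
    using y0 by (intro power_mono; simp)+
  then have "0 \<le> 1 - 5*y/6 - 3*y^2/8 - y^3/24"
    using \<open>y \<le> 79/100\<close> by (simp add: power2_eq_square power3_eq_cube)
  then have "0 \<le> y^2 * (1 - 5*y/6 - 3*y^2/8 - y^3/24)"
    by simp
  also have "\<dots> = (y - y^3/6 - y^4/24) * (5 + y) - 5 * y"
    by (simp add: field_simps eval_nat_numeral)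
  finally have "5 * y \<le> (y - y^3/6 - y^4/24) * (5 + y)"
    by linarith
  also have "\<dots> \<le> sin y * (5 + y)"
    using sin_ge_taylor[of y] y0 by (intro mult_right_mono) auto
  finally have "5 * y \<le> sin y * (5 + y)" .
  moreover have "sin y > 0"
    using y0 y1 pi_approx by (intro sin_gt_zero) auto
  ultimately show ?thesis
    using y0 by (simp add: field_simps)
qed

lemma inverse_le_csc:
  assumes "0 < y" "y < pi"
  shows "1 / y \<le> 1 / sin y"
  using assms sin_x_le_x[of y] sin_gt_zero[of y] by (intro divide_left_mono) auto

lemma csc_half_angle_mono:
  fixes q m :: nat
  assumes "1 \<le> q" "q \<le> m"
  shows "1 / sin (pi / (2 * real q)) \<le> 1 / sin (pi / (2 * real m))"
proof -
  have "0 < pi / (2 * real m)"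
    using assms by simp
  moreover have "pi / (2 * real m) \<le> pi / (2 * real q)" "pi / (2 * real q) \<le> pi / 2"
    using assms by (intro divide_left_mono; simp)+
  ultimately have "sin (pi / (2 * real m)) \<le> sin (pi / (2 * real q))" "sin (pi / (2 * real m)) > 0"
    by (auto intro!: sin_monotone_2pi_le sin_gt_zero)
  then show ?thesis
    by (intro divide_left_mono) auto
qed

text \<open>With \<open>csc y \<approx> 1/y\<close> the terms linear in \<open>p, q, n\<close> cancel by \<open>p + q \<le> n\<close>, and the remaining
  error \<open>3/5\<close> is covered by \<open>2 - 4/\<pi>\<close>.\<close>

lemma even_odd_csc_sum_le:
  fixes p q n :: nat
  assumes p: "4 \<le> p" and q: "3 \<le> q" and pq: "p + q \<le> n"
  shows "2 / sin (pi / real p) + 1 / sin (pi / (2 * real q)) \<le> 2 + 1 / sin (pi / (2 * real (n - 2)))"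
proof -
  have "pi / real p \<le> pi / 4" "pi / (2 * real q) \<le> pi / 4"
    using p q by (intro divide_left_mono; simp)+
  then have "1 / sin (pi / real p) \<le> real p / pi + 1/5"
    and "1 / sin (pi / (2 * real q)) \<le> 2 * real q / pi + 1/5"
    using csc_le_inverse_plus[of "pi / real p"] csc_le_inverse_plus[of "pi / (2 * real q)"] p q
    by simp_all
  moreover have "2 * (real n - 2) / pi \<le> 1 / sin (pi / (2 * real (n - 2)))"
    using inverse_le_csc[of "pi / (2 * real (n - 2))"] p q pq by (simp add: divide_simps of_nat_diff)
  moreover have "2 * real p / pi + 2 * real q / pi \<le> 2 * real n / pi"
    using pq by (simp add: divide_right_mono add_divide_distrib[symmetric])
  moreover have "4 / pi \<le> 7/5"
    using pi_gt3 by (simp add: divide_simps)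
  moreover have "2 * (real n - 2) / pi = 2 * real n / pi - 4 / pi"
    by (simp add: field_simps)
  ultimately show ?thesis
    by simp
qed

lemma sidigraph_arc: "sidigraph n A \<Longrightarrow> A i j \<noteq> 0 \<Longrightarrow> i < n \<and> j < n \<and> i \<noteq> j"
  unfolding sidigraph_def by blast

lemma cycle_of_list_nth:
  assumes "distinct vs" "i < length vs"
  shows "cycle_of_list vs (vs ! i) = vs ! ((i + 1) mod length vs)"
proof -
  have "map (cycle_of_list vs ^^ 1) vs = rotate 1 vs"
    by (rule cyclic_rotation[OF assms(1)])
  then have "map (cycle_of_list vs) vs ! i = rotate 1 vs ! i"
    by simp
  then show ?thesis
    using assms(2) by (simp add: nth_rotate1)
qed

lemma cycle_arcs_eq_graph:
  assumes "distinct vs"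
  shows "cycle_arcs vs = (\<lambda>x. (x, cycle_of_list vs x)) ` set vs"
proof -
  have "cycle_arcs vs = (\<lambda>i. (vs ! i, vs ! ((i + 1) mod length vs))) ` {..<length vs}"
    unfolding cycle_arcs_def by auto
  also have "\<dots> = (\<lambda>x. (x, cycle_of_list vs x)) ` ((!) vs ` {..<length vs})"
    unfolding image_image using cycle_of_list_nth[OF assms] by (intro image_cong) simp_all
  also have "(!) vs ` {..<length vs} = set vs"
    by (auto simp: in_set_conv_nth)
  finally show ?thesis .
qed

lemma cycle_verts_cycle_arcs: "distinct vs \<Longrightarrow> cycle_verts (cycle_arcs vs) = set vs"
  unfolding cycle_verts_def by (simp add: cycle_arcs_eq_graph image_image)

lemma card_cycle_arcs: "distinct vs \<Longrightarrow> card (cycle_arcs vs) = length vs"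
  by (simp add: cycle_arcs_eq_graph card_image inj_on_def distinct_card)

lemma cycle_of_list_moves:
  assumes "distinct vs" "length vs \<ge> 2" "x \<in> set vs"
  shows "cycle_of_list vs x \<noteq> x"
proof -
  obtain i where i: "i < length vs" "x = vs ! i"
    using assms(3) by (auto simp: in_set_conv_nth)
  have "(i + 1) mod length vs \<noteq> i"
  proof (cases "i + 1 < length vs")
    case False
    then have "i + 1 = length vs"
      using i(1) by simp
    then show ?thesis
      using assms(2) by simp
  qed simp
  moreover have "(i + 1) mod length vs < length vs"
    using i(1) by (intro mod_less_divisor) linarith
  ultimately have "vs ! ((i + 1) mod length vs) \<noteq> vs ! i"
    using assms(1) i by (simp add: nth_eq_iff_index_eq)
  then show ?thesis
    using cycle_of_list_nth[OF assms(1) i(1)] i by simp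
qed

lemma sign_cycle_of_list: "distinct vs \<Longrightarrow> sign (cycle_of_list vs) = (-1) ^ (length vs - 1)"
proof (induction vs rule: cycle_of_list.induct)
  case (1 i j cs)
  then have "sign (cycle_of_list (i # j # cs))
      = sign (Transposition.transpose i j) * sign (cycle_of_list (j # cs))"
    by (simp add: sign_compose permutation_of_cycle permutation_swap_id)
  also have "\<dots> = (-1) ^ (length (i # j # cs) - 1)"
    using 1 by (auto simp: sign_swap_id)
  finally show ?case .
qed simp_all

lemma cycle_list_in_range:
  assumes "sidigraph n A" "cycle_list A vs"
  shows "set vs \<subseteq> {0..<n}"
proof
  fix x
  assume "x \<in> set vs"
  then obtain i where "i < length vs" "x = vs ! i"
    by (auto simp: in_set_conv_nth)
  then have "A x (vs ! ((i + 1) mod length vs)) \<noteq> 0"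
    using assms(2) unfolding cycle_list_def by auto
  then show "x \<in> {0..<n}"
    using sidigraph_arc[OF assms(1)] by auto
qed

lemma cycle_sign_cycle_arcs:
  assumes "sidigraph n A" "cycle_list A vs"
  shows "cycle_sign A (cycle_arcs vs) \<in> {1, -1}"
proof -
  have "\<bar>A i j\<bar> = 1" if "(i, j) \<in> cycle_arcs vs" for i j
  proof -
    have "A i j \<noteq> 0"
      using that assms(2) unfolding cycle_arcs_def cycle_list_def by auto
    moreover have "A i j \<in> {-1, 0, 1}"
      using assms(1) unfolding sidigraph_def by blast
    ultimately show ?thesis
      by auto
  qed
  then have "\<bar>cycle_sign A (cycle_arcs vs)\<bar> = 1"
    unfolding cycle_sign_def abs_prod by (intro prod.neutral) auto
  then show ?thesis
    by auto
qed

lemma cycle_list_level_const: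
  fixes f :: "nat \<Rightarrow> nat"
  assumes "vs \<noteq> []" and up: "\<forall>i<length vs. f (vs ! i) \<le> f (vs ! ((i + 1) mod length vs))"
  shows "\<forall>i<length vs. f (vs ! i) = f (vs ! 0)"
proof -
  let ?L = "length vs"
  have mono: "f (vs ! i) \<le> f (vs ! j)" if "i \<le> j" "j < ?L" for i j
    using that(1,2)
  proof (induction j rule: dec_induct)
    case (step k)
    then have "(k + 1) mod ?L = Suc k"
      by simp
    then show ?case
      using step up[rule_format, of k] by simp
  qed simp
  have "?L > 0"
    using assms(1) by simp
  then have "f (vs ! (?L - 1)) \<le> f (vs ! 0)"
    using up[rule_format, of "?L - 1"] by simp
  moreover have "f (vs ! 0) \<le> f (vs ! i)" "f (vs ! i) \<le> f (vs ! (?L - 1))" if "i < ?L" for i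
    using mono[of 0 i] mono[of i "?L - 1"] that by simp_all
  ultimately show ?thesis
    using le_antisym order_trans by blast
qed

lemma cycle_list_iff_arcs:
  assumes "distinct vs" "length vs \<ge> 2"
  shows "cycle_list A vs \<longleftrightarrow> (\<forall>x\<in>set vs. A x (cycle_of_list vs x) \<noteq> 0)"
proof -
  have "vs ! ((i + 1) mod length vs) = cycle_of_list vs (vs ! i)" if "i < length vs" for i
    using cycle_of_list_nth[OF assms(1) that] by simp
  then have "(\<forall>i<length vs. A (vs ! i) (vs ! ((i + 1) mod length vs)) \<noteq> 0)
      \<longleftrightarrow> (\<forall>x\<in>set vs. A x (cycle_of_list vs x) \<noteq> 0)"
    by (simp add: all_set_conv_all_nth)
  then show ?thesis
    unfolding cycle_list_def using assms by simp
qed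

lemma moved_point_on_dcycle:
  assumes perm: "\<pi> permutes {0..<n}" and along_arcs: "\<forall>i<n. \<pi> i \<noteq> i \<longrightarrow> A i (\<pi> i) \<noteq> 0"
    and a: "\<pi> a \<noteq> a"
  shows "\<exists>c\<in>dcycles A. a \<in> cycle_verts c \<and> (\<forall>e\<in>c. \<pi> (fst e) = snd e)"
proof -
  have "permutation \<pi>"
    using perm by (rule permutes_imp_permutation[rotated]) simp
  define vs where "vs = support \<pi> a"
  have "distinct vs" "length vs \<ge> 2"
    unfolding vs_def using cycle_of_permutation[OF \<open>permutation \<pi>\<close>]
      least_power_gt_one[OF \<open>permutation \<pi>\<close> a] by simp_all
  have "a \<in> set vs"
    using least_power_of_permutation(2)[OF \<open>permutation \<pi>\<close>, of a]
    unfolding vs_def by (auto intro: image_eqI[where x = 0])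
  have follows: "cycle_of_list vs x = \<pi> x" if "x \<in> set vs" for x
    using cycle_restrict[OF \<open>permutation \<pi>\<close>] that unfolding vs_def by simp
  have "A x (cycle_of_list vs x) \<noteq> 0" if "x \<in> set vs" for x
  proof -
    have "\<pi> x \<noteq> x"
      using cycle_of_list_moves[OF \<open>distinct vs\<close> \<open>length vs \<ge> 2\<close> that] follows[OF that] by simp
    then show ?thesis
      using along_arcs permutes_not_in[OF perm, of x] follows[OF that] by auto
  qed
  then have "cycle_list A vs"
    using cycle_list_iff_arcs[OF \<open>distinct vs\<close> \<open>length vs \<ge> 2\<close>] by blast
  moreover have "a \<in> cycle_verts (cycle_arcs vs)"
    using \<open>a \<in> set vs\<close> cycle_verts_cycle_arcs[OF \<open>distinct vs\<close>] by simp
  moreover have "\<forall>e\<in>cycle_arcs vs. \<pi> (fst e) = snd e"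
    using follows unfolding cycle_arcs_eq_graph[OF \<open>distinct vs\<close>] by auto
  ultimately show ?thesis
    unfolding dcycles_def by blast
qed

section \<open>The characteristic polynomial\<close>

definition char_entry :: "(nat \<Rightarrow> nat \<Rightarrow> int) \<Rightarrow> nat \<Rightarrow> nat \<Rightarrow> complex poly" where
  "char_entry A i j = (if i = j then [:0, 1:] else [:- complex_of_int (A i j):])"

definition perm_term :: "nat \<Rightarrow> (nat \<Rightarrow> nat \<Rightarrow> int) \<Rightarrow> (nat \<Rightarrow> nat) \<Rightarrow> complex poly" where
  "perm_term n A \<pi> = of_int (sign \<pi>) * (\<Prod>i = 0..<n. char_entry A i (\<pi> i))"

lemma char_poly_adj_mat:
  assumes "sidigraph n A"
  shows "char_poly (adj_mat n A) = (\<Sum>\<pi> | \<pi> permutes {0..<n}. perm_term n A \<pi>)"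
proof -
  have "char_poly_matrix (adj_mat n A) \<in> carrier_mat n n"
    unfolding adj_mat_def by simp
  moreover have entry: "char_poly_matrix (adj_mat n A) $$ (i, j) = char_entry A i j"
    if "i < n" "j < n" for i j
    using that assms unfolding char_poly_matrix_def adj_mat_def char_entry_def sidigraph_def by auto
  ultimately show ?thesis
    unfolding char_poly_def perm_term_def
    by (auto simp: det_def' permutes_in_image entry intro!: sum.cong prod.cong)
qed

lemma perm_term_eq_0:
  assumes "i < n" "\<pi> i \<noteq> i" "A i (\<pi> i) = 0"
  shows "perm_term n A \<pi> = 0"
  unfolding perm_term_def using assms by (auto simp: char_entry_def intro!: prod_zero bexI[of _ i])

lemma prod_char_entry_support:
  assumes V: "V \<subseteq> {0..<n}" and moves: "\<forall>x\<in>V. \<tau> x \<noteq> x" and fixed: "\<forall>x. x \<notin> V \<longrightarrow> \<tau> x = x"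
  shows "(\<Prod>i = 0..<n. char_entry A i (\<tau> i))
    = monom 1 (n - card V) * (\<Prod>i\<in>V. [:- complex_of_int (A i (\<tau> i)):])"
proof -
  have "finite V"
    using V finite_subset by blast
  have "(\<Prod>i = 0..<n. char_entry A i (\<tau> i))
      = (\<Prod>i\<in>V. char_entry A i (\<tau> i)) * (\<Prod>i\<in>{0..<n} - V. char_entry A i (\<tau> i))"
    using V \<open>finite V\<close> by (metis prod.subset_diff finite_atLeastLessThan mult.commute)
  also have "(\<Prod>i\<in>V. char_entry A i (\<tau> i)) = (\<Prod>i\<in>V. [:- complex_of_int (A i (\<tau> i)):])"
    using moves by (intro prod.cong) (auto simp: char_entry_def)
  also have "(\<Prod>i\<in>{0..<n} - V. char_entry A i (\<tau> i)) = monom 1 1 ^ card ({0..<n} - V)"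
    using fixed by (simp add: char_entry_def monom_Suc one_pCons)
  also have "\<dots> = monom 1 (card ({0..<n} - V))"
    by (rule x_pow_n)
  also have "card ({0..<n} - V) = n - card V"
    using V \<open>finite V\<close> by (simp add: card_Diff_subset)
  finally show ?thesis
    by (simp only: mult.commute)
qed

lemma perm_term_id: "perm_term n A id = monom 1 n"
  using prod_char_entry_support[of "{}" n id A] by (simp add: perm_term_def)

lemma prod_const_poly: "finite S \<Longrightarrow> (\<Prod>e\<in>S. [:f e:]) = [:\<Prod>e\<in>S. f e:]"
  by (induct rule: finite_induct) (auto simp: mult_to_poly mult.commute)

lemma prod_char_entry_cycle:
  assumes "distinct vs"
  shows "(\<Prod>i\<in>set vs. [:- complex_of_int (A i (cycle_of_list vs i)):])
    = [:(-1) ^ length vs * complex_of_int (cycle_sign A (cycle_arcs vs)):]"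
proof -
  have inj: "inj_on (\<lambda>x. (x, cycle_of_list vs x)) (set vs)"
    by (auto simp: inj_on_def)
  have "(\<Prod>i\<in>set vs. [:- complex_of_int (A i (cycle_of_list vs i)):])
      = [:\<Prod>e\<in>cycle_arcs vs. - complex_of_int (A (fst e) (snd e)):]"
    unfolding cycle_arcs_eq_graph[OF assms] prod.reindex[OF inj] by (simp add: prod_const_poly)
  also have "\<dots> = [:(-1) ^ length vs * complex_of_int (cycle_sign A (cycle_arcs vs)):]"
    unfolding prod_uminus card_cycle_arcs[OF assms] cycle_sign_def by (simp add: case_prod_unfold)
  finally show ?thesis .
qed

lemma sign_times_cycle_const:
  assumes "p \<ge> 1"
  shows "(of_int ((-1) ^ (p - 1)) :: complex poly) * [:(-1) ^ p * c:] = - [:c:]"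
proof -
  obtain k where "p = Suc k"
    using assms by (cases p) auto
  then show ?thesis
    by (simp add: of_int_poly mult_to_poly)
qed

lemma perm_term_cycle_of_list:
  assumes "distinct vs" "length vs \<ge> 2" "set vs \<subseteq> {0..<n}"
  shows "perm_term n A (cycle_of_list vs)
    = - (monom 1 (n - length vs) * [:complex_of_int (cycle_sign A (cycle_arcs vs)):])"
proof -
  have "(\<Prod>i = 0..<n. char_entry A i (cycle_of_list vs i))
      = monom 1 (n - length vs) * [:(-1) ^ length vs * complex_of_int (cycle_sign A (cycle_arcs vs)):]"
    using prod_char_entry_support[of "set vs" n "cycle_of_list vs" A] assms
    by (simp add: cycle_of_list_moves id_outside_supp prod_char_entry_cycle distinct_card)
  then have "perm_term n A (cycle_of_list vs) = monom 1 (n - length vs)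
      * (of_int ((-1) ^ (length vs - 1)) * [:(-1) ^ length vs * complex_of_int (cycle_sign A (cycle_arcs vs)):])"
    unfolding perm_term_def sign_cycle_of_list[OF assms(1)] by (simp only: mult.left_commute)
  moreover have "of_int ((-1) ^ (length vs - 1))
      * [:(-1) ^ length vs * complex_of_int (cycle_sign A (cycle_arcs vs)):]
      = - [:complex_of_int (cycle_sign A (cycle_arcs vs)):]"
    using assms(2) by (intro sign_times_cycle_const) simp
  ultimately show ?thesis
    by (simp only: mult_minus_right)
qed

lemma monom_times_binomials:
  "monom (1::'a::comm_ring_1) a * (monom 1 p - [:c1:]) * (monom 1 q - [:c2:])
    = monom 1 (a + p + q) - monom 1 (a + q) * [:c1:] - monom 1 (a + p) * [:c2:]
      + monom 1 a * [:c1:] * [:c2:]"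
proof -
  have "monom (1::'a) (a + p + q) = monom 1 a * monom 1 p * monom 1 q"
    "monom (1::'a) (a + q) = monom 1 a * monom 1 q" "monom (1::'a) (a + p) = monom 1 a * monom 1 p"
    by (simp_all add: mult_monom)
  then show ?thesis
    by (simp add: algebra_simps)
qed

locale two_disjoint_cycles =
  fixes n :: nat and A :: "nat \<Rightarrow> nat \<Rightarrow> int" and vs1 vs2 :: "nat list"
  assumes sidigraph: "sidigraph n A"
    and cycle1: "cycle_list A vs1" and cycle2: "cycle_list A vs2"
    and dcycles_eq: "dcycles A = {cycle_arcs vs1, cycle_arcs vs2}"
    and disjoint: "set vs1 \<inter> set vs2 = {}"
begin

abbreviation "\<sigma>\<^sub>1 \<equiv> cycle_of_list vs1"
abbreviation "\<sigma>\<^sub>2 \<equiv> cycle_of_list vs2"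

lemma swap: "two_disjoint_cycles n A vs2 vs1"
  using sidigraph cycle1 cycle2 dcycles_eq disjoint by unfold_locales auto

lemma distinct1: "distinct vs1" and length1: "length vs1 \<ge> 2"
  using cycle1 unfolding cycle_list_def by auto

lemma distinct2: "distinct vs2" and length2: "length vs2 \<ge> 2"
  using cycle2 unfolding cycle_list_def by auto

lemma range1: "set vs1 \<subseteq> {0..<n}" and range2: "set vs2 \<subseteq> {0..<n}"
  using cycle_list_in_range[OF sidigraph cycle1] cycle_list_in_range[OF sidigraph cycle2] by auto

lemma length_sum_le: "length vs1 + length vs2 \<le> n"
proof -
  have "card (set vs1 \<union> set vs2) \<le> card {0..<n}"
    using range1 range2 by (intro card_mono) auto
  then show ?thesis
    using disjoint by (simp add: card_Un_disjoint distinct_card[OF distinct1] distinct_card[OF distinct2])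
qed

text \<open>The orbit of a moved vertex of \<open>vs1\<close> is a directed cycle through it, which can only be
  the cycle \<open>vs1\<close>.\<close>

lemma permutation_on_cycle1:
  assumes perm: "\<pi> permutes {0..<n}" and along_arcs: "\<forall>i<n. \<pi> i \<noteq> i \<longrightarrow> A i (\<pi> i) \<noteq> 0"
  shows "(\<forall>x\<in>set vs1. \<pi> x = \<sigma>\<^sub>1 x) \<or> (\<forall>x\<in>set vs1. \<pi> x = x)"
proof (rule ccontr)
  assume "\<not> ?thesis"
  then obtain x y where x: "x \<in> set vs1" "\<pi> x \<noteq> \<sigma>\<^sub>1 x" and y: "y \<in> set vs1" "\<pi> y \<noteq> y"
    by auto
  obtain c where c: "c \<in> dcycles A" "y \<in> cycle_verts c" "\<forall>e\<in>c. \<pi> (fst e) = snd e"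
    using moved_point_on_dcycle[where A = A, OF perm along_arcs y(2)] by blast
  have "c = cycle_arcs vs1"
    using c(1,2) y(1) dcycles_eq disjoint cycle_verts_cycle_arcs[OF distinct2] by auto
  then have "(x, \<sigma>\<^sub>1 x) \<in> c"
    using cycle_arcs_eq_graph[OF distinct1] x(1) by auto
  then show False
    using c(3) x(2) by auto
qed

lemma permutation_fixes_outside:
  assumes perm: "\<pi> permutes {0..<n}" and along_arcs: "\<forall>i<n. \<pi> i \<noteq> i \<longrightarrow> A i (\<pi> i) \<noteq> 0"
    and "x \<notin> set vs1" "x \<notin> set vs2"
  shows "\<pi> x = x"
proof (rule ccontr)
  assume "\<pi> x \<noteq> x"
  then obtain c where "c \<in> dcycles A" "x \<in> cycle_verts c"
    using moved_point_on_dcycle[where A = A, OF perm along_arcs] by blast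
  then show False
    using assms(3,4) dcycles_eq cycle_verts_cycle_arcs[OF distinct1] cycle_verts_cycle_arcs[OF distinct2]
    by auto
qed

lemma permutation_cases:
  assumes perm: "\<pi> permutes {0..<n}" and along_arcs: "\<forall>i<n. \<pi> i \<noteq> i \<longrightarrow> A i (\<pi> i) \<noteq> 0"
  shows "\<pi> \<in> {id, \<sigma>\<^sub>1, \<sigma>\<^sub>2, \<sigma>\<^sub>1 \<circ> \<sigma>\<^sub>2}"
proof -
  define f1 where "f1 = (if \<forall>x\<in>set vs1. \<pi> x = x then id else \<sigma>\<^sub>1)"
  define f2 where "f2 = (if \<forall>x\<in>set vs2. \<pi> x = x then id else \<sigma>\<^sub>2)"
  have f1: "f1 = id \<or> f1 = \<sigma>\<^sub>1" "\<forall>x\<in>set vs1. \<pi> x = f1 x"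
    using permutation_on_cycle1[OF assms] unfolding f1_def by auto
  have f2: "f2 = id \<or> f2 = \<sigma>\<^sub>2" "\<forall>x\<in>set vs2. \<pi> x = f2 x"
    using two_disjoint_cycles.permutation_on_cycle1[OF swap assms] unfolding f2_def by auto
  have f1_outside: "f1 x = x" if "x \<notin> set vs1" for x
    using f1(1) that by (auto simp: id_outside_supp)
  have f2_outside: "f2 x = x" if "x \<notin> set vs2" for x
    using f2(1) that by (auto simp: id_outside_supp)
  have f2_in: "f2 x \<in> set vs2" if "x \<in> set vs2" for x
    using f2(1) that permutes_in_image[OF cycle_permutes[of vs2], of x] by (elim disjE) simp_all
  have "\<pi> = f1 \<circ> f2"
  proof
    fix x
    consider "x \<in> set vs1" | "x \<in> set vs2" | "x \<notin> set vs1" "x \<notin> set vs2"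
      by blast
    then show "\<pi> x = (f1 \<circ> f2) x"
    proof cases
      case 1
      then have "x \<notin> set vs2"
        using disjoint by blast
      then show ?thesis
        using 1 f1(2) f2_outside by simp
    next
      case 2
      then have "f2 x \<notin> set vs1"
        using f2_in disjoint by blast
      then show ?thesis
        using 2 f2(2) f1_outside by simp
    next
      case 3
      then show ?thesis
        using permutation_fixes_outside[OF assms] f1_outside f2_outside by simp
    qed
  qed
  then show ?thesis
    using f1(1) f2(1) by (elim disjE) simp_all
qed


lemma comp_on_vs1:
  assumes "x \<in> set vs1"
  shows "(\<sigma>\<^sub>1 \<circ> \<sigma>\<^sub>2) x = \<sigma>\<^sub>1 x"
proof -
  have "x \<notin> set vs2"
    using assms disjoint by blast
  then show ?thesis
    by (simp add: id_outside_supp)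
qed

lemma comp_on_vs2:
  assumes "x \<in> set vs2"
  shows "(\<sigma>\<^sub>1 \<circ> \<sigma>\<^sub>2) x = \<sigma>\<^sub>2 x"
proof -
  have "\<sigma>\<^sub>2 x \<notin> set vs1"
    using assms disjoint permutes_in_image[OF cycle_permutes[of vs2], of x] by blast
  then show ?thesis
    by (simp add: id_outside_supp)
qed

lemma perm_term_cycle_pair:
  "perm_term n A (\<sigma>\<^sub>1 \<circ> \<sigma>\<^sub>2) = monom 1 (n - length vs1 - length vs2)
    * [:complex_of_int (cycle_sign A (cycle_arcs vs1)):] * [:complex_of_int (cycle_sign A (cycle_arcs vs2)):]"
proof -
  define c1 where "c1 = complex_of_int (cycle_sign A (cycle_arcs vs1))"
  define c2 where "c2 = complex_of_int (cycle_sign A (cycle_arcs vs2))"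
  have "(\<Prod>i = 0..<n. char_entry A i ((\<sigma>\<^sub>1 \<circ> \<sigma>\<^sub>2) i))
      = monom 1 (n - card (set vs1 \<union> set vs2))
        * (\<Prod>i\<in>set vs1 \<union> set vs2. [:- complex_of_int (A i ((\<sigma>\<^sub>1 \<circ> \<sigma>\<^sub>2) i)):])"
    using range1 range2 comp_on_vs1 comp_on_vs2 cycle_of_list_moves[OF distinct1 length1]
      cycle_of_list_moves[OF distinct2 length2]
    by (intro prod_char_entry_support) (auto simp: id_outside_supp)
  also have "card (set vs1 \<union> set vs2) = length vs1 + length vs2"
    using disjoint distinct1 distinct2 by (simp add: card_Un_disjoint distinct_card)
  also have "(\<Prod>i\<in>set vs1 \<union> set vs2. [:- complex_of_int (A i ((\<sigma>\<^sub>1 \<circ> \<sigma>\<^sub>2) i)):])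
      = (\<Prod>i\<in>set vs1. [:- complex_of_int (A i (\<sigma>\<^sub>1 i)):]) * (\<Prod>i\<in>set vs2. [:- complex_of_int (A i (\<sigma>\<^sub>2 i)):])"
    using disjoint comp_on_vs1 comp_on_vs2 by (simp add: prod.union_disjoint)
  finally have "(\<Prod>i = 0..<n. char_entry A i ((\<sigma>\<^sub>1 \<circ> \<sigma>\<^sub>2) i))
      = monom 1 (n - (length vs1 + length vs2)) * ([:(-1) ^ length vs1 * c1:] * [:(-1) ^ length vs2 * c2:])"
    by (simp add: prod_char_entry_cycle distinct1 distinct2 c1_def c2_def)
  moreover have "sign (\<sigma>\<^sub>1 \<circ> \<sigma>\<^sub>2) = (-1) ^ (length vs1 - 1) * (-1) ^ (length vs2 - 1)"
    by (simp add: sign_compose permutation_of_cycle sign_cycle_of_list distinct1 distinct2)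
  ultimately have "perm_term n A (\<sigma>\<^sub>1 \<circ> \<sigma>\<^sub>2) = monom 1 (n - (length vs1 + length vs2))
      * ((of_int ((-1) ^ (length vs1 - 1)) * [:(-1) ^ length vs1 * c1:])
        * (of_int ((-1) ^ (length vs2 - 1)) * [:(-1) ^ length vs2 * c2:]))"
    unfolding perm_term_def by (simp only: of_int_mult ac_simps)
  moreover have "of_int ((-1) ^ (length vs1 - 1)) * [:(-1) ^ length vs1 * c1:] = - [:c1:]"
    "of_int ((-1) ^ (length vs2 - 1)) * [:(-1) ^ length vs2 * c2:] = - [:c2:]"
    using length1 length2 by (intro sign_times_cycle_const; simp)+
  ultimately show ?thesis
    unfolding c1_def[symmetric] c2_def[symmetric] by (simp only: diff_diff_left minus_mult_minus mult.assoc)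
qed

lemma distinct_cycle_perms: "distinct [id, \<sigma>\<^sub>1, \<sigma>\<^sub>2, \<sigma>\<^sub>1 \<circ> \<sigma>\<^sub>2]"
proof -
  define x1 where "x1 = vs1 ! 0"
  define x2 where "x2 = vs2 ! 0"
  have "x1 \<in> set vs1" "x2 \<in> set vs2"
    using length1 length2 unfolding x1_def x2_def by (auto intro!: nth_mem)
  moreover from this have "x1 \<notin> set vs2" "x2 \<notin> set vs1"
    using disjoint by blast+
  ultimately have "map (\<lambda>\<pi>. (\<pi> x1 = x1, \<pi> x2 = x2)) [id, \<sigma>\<^sub>1, \<sigma>\<^sub>2, \<sigma>\<^sub>1 \<circ> \<sigma>\<^sub>2]
      = [(True, True), (False, True), (True, False), (False, False)]"
    using comp_on_vs1 comp_on_vs2 cycle_of_list_moves[OF distinct1 length1]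
      cycle_of_list_moves[OF distinct2 length2]
    by (auto simp: id_outside_supp)
  then have "distinct (map (\<lambda>\<pi>. (\<pi> x1 = x1, \<pi> x2 = x2)) [id, \<sigma>\<^sub>1, \<sigma>\<^sub>2, \<sigma>\<^sub>1 \<circ> \<sigma>\<^sub>2])"
    by simp
  then show ?thesis
    by (rule conjunct1[OF iffD1[OF distinct_map]])
qed

text \<open>Only the four permutations built from the two cycles survive in the determinant expansion.\<close>

theorem char_poly_two_cycles:
  "char_poly (adj_mat n A) = monom 1 (n - length vs1 - length vs2)
    * (monom 1 (length vs1) - [:complex_of_int (cycle_sign A (cycle_arcs vs1)):])
    * (monom 1 (length vs2) - [:complex_of_int (cycle_sign A (cycle_arcs vs2)):])"
proof -
  define F where "F = [id, \<sigma>\<^sub>1, \<sigma>\<^sub>2, \<sigma>\<^sub>1 \<circ> \<sigma>\<^sub>2]"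
  have "distinct F"
    unfolding F_def by (rule distinct_cycle_perms)
  have perms: "set F \<subseteq> {\<pi>. \<pi> permutes {0..<n}}"
    using permutes_subset[OF cycle_permutes range1] permutes_subset[OF cycle_permutes range2]
    by (auto simp: F_def permutes_compose)
  have vanish: "\<forall>\<pi>\<in>{\<pi>. \<pi> permutes {0..<n}} - set F. perm_term n A \<pi> = 0"
    using permutation_cases perm_term_eq_0 unfolding F_def by fastforce
  have "char_poly (adj_mat n A) = (\<Sum>\<pi>\<in>set F. perm_term n A \<pi>)"
    unfolding char_poly_adj_mat[OF sidigraph]
    by (rule sum.mono_neutral_right[OF _ perms vanish]) (simp add: finite_permutations)
  also have "\<dots> = (\<Sum>\<pi>\<leftarrow>F. perm_term n A \<pi>)"
    by (rule sum.distinct_set_conv_list[OF \<open>distinct F\<close>])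
  also have "\<dots> = monom 1 (n - length vs1 - length vs2 + length vs1 + length vs2)
      - monom 1 (n - length vs1 - length vs2 + length vs2) * [:complex_of_int (cycle_sign A (cycle_arcs vs1)):]
      - monom 1 (n - length vs1 - length vs2 + length vs1) * [:complex_of_int (cycle_sign A (cycle_arcs vs2)):]
      + monom 1 (n - length vs1 - length vs2)
        * [:complex_of_int (cycle_sign A (cycle_arcs vs1)):] * [:complex_of_int (cycle_sign A (cycle_arcs vs2)):]"
    using length_sum_le range1 range2
    by (simp add: F_def perm_term_id perm_term_cycle_of_list distinct1 distinct2 length1 length2
        perm_term_cycle_pair Suc_diff_le)
  finally show ?thesis
    by (simp only: monom_times_binomials)
qed

end

lemma (in two_disjoint_cycles) energy_eq:
  "energy n A = cycle_energy (length vs1) (of_int (cycle_sign A (cycle_arcs vs1)))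
    + cycle_energy (length vs2) (of_int (cycle_sign A (cycle_arcs vs2)))"
  unfolding energy_eq_root_energy char_poly_two_cycles
  using length1 length2 cycle_sign_cycle_arcs[OF sidigraph cycle1] cycle_sign_cycle_arcs[OF sidigraph cycle2]
  by (intro root_energy_monom_binomials) auto

lemma dcycle_len_ge_2: "c \<in> dcycles A \<Longrightarrow> 2 \<le> cycle_len c"
  unfolding dcycles_def cycle_len_def cycle_list_def by (auto simp: card_cycle_arcs)

lemma dcycle_sign: "sidigraph n A \<Longrightarrow> c \<in> dcycles A \<Longrightarrow> cycle_sign A c \<in> {1, -1}"
  unfolding dcycles_def using cycle_sign_cycle_arcs by blast

lemma in_Dns_two_disjoint_cycles:
  assumes "in_Dns n A" "c1 \<in> dcycles A" "c2 \<in> dcycles A" "c1 \<noteq> c2"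
  obtains vs1 vs2 where "c1 = cycle_arcs vs1" "c2 = cycle_arcs vs2" "two_disjoint_cycles n A vs1 vs2"
proof -
  obtain vs1 vs2 where vs: "c1 = cycle_arcs vs1" "cycle_list A vs1" "c2 = cycle_arcs vs2" "cycle_list A vs2"
    using assms(2,3) unfolding dcycles_def by auto
  have "card (dcycles A) = 2"
    using assms(1) unfolding in_Dns_def by simp
  then have "dcycles A = {c1, c2}"
    using assms(2-4) by (intro card_subset_eq[symmetric]) (auto intro: card_ge_0_finite)
  moreover have "cycle_verts c1 \<inter> cycle_verts c2 = {}"
    using assms unfolding in_Dns_def by blast
  then have "set vs1 \<inter> set vs2 = {}"
    using vs by (simp add: cycle_list_def cycle_verts_cycle_arcs)
  ultimately have "two_disjoint_cycles n A vs1 vs2"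
    using assms(1) vs unfolding in_Dns_def by unfold_locales auto
  with vs show thesis
    using that by blast
qed

lemma energy_Dns:
  assumes "in_Dns n A" "c1 \<in> dcycles A" "c2 \<in> dcycles A" "c1 \<noteq> c2"
  shows "energy n A = cycle_energy (cycle_len c1) (of_int (cycle_sign A c1))
    + cycle_energy (cycle_len c2) (of_int (cycle_sign A c2))"
proof -
  obtain vs1 vs2 where "c1 = cycle_arcs vs1" "c2 = cycle_arcs vs2" "two_disjoint_cycles n A vs1 vs2"
    using in_Dns_two_disjoint_cycles[OF assms] .
  then show ?thesis
    using two_disjoint_cycles.energy_eq two_disjoint_cycles.distinct1 two_disjoint_cycles.distinct2
    by (simp add: cycle_len_def card_cycle_arcs)
qed

lemma Dns_cycle_lens_le:
  assumes "in_Dns n A" "c1 \<in> dcycles A" "c2 \<in> dcycles A" "c1 \<noteq> c2"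
  shows "cycle_len c1 + cycle_len c2 \<le> n"
proof -
  obtain vs1 vs2 where "c1 = cycle_arcs vs1" "c2 = cycle_arcs vs2" "two_disjoint_cycles n A vs1 vs2"
    using in_Dns_two_disjoint_cycles[OF assms] .
  then show ?thesis
    using two_disjoint_cycles.length_sum_le two_disjoint_cycles.distinct1 two_disjoint_cycles.distinct2
    by (simp add: cycle_len_def card_cycle_arcs)
qed

lemma energy_Dns_pq:
  assumes "Dns_pq n sp p sq q T"
  shows "energy n T = cycle_energy p (of_int sp) + cycle_energy q (of_int sq)"
  using assms energy_Dns unfolding Dns_pq_def by blast

lemma Dns_even_odd_energy:
  assumes "Dns_even_odd n S"
  obtains p q and sp sq :: complex
  where "energy n S = cycle_energy p sp + cycle_energy q sq" "even p" "odd q" "2 \<le> p" "3 \<le> q"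
    "p + q \<le> n" "sp \<in> {1, -1}" "sq \<in> {1, -1}"
proof -
  obtain c1 c2 where D: "in_Dns n S" and c: "c1 \<in> dcycles S" "c2 \<in> dcycles S"
    and parity: "even (cycle_len c1)" "odd (cycle_len c2)"
    using assms unfolding Dns_even_odd_def by blast
  then have "c1 \<noteq> c2"
    by auto
  have "sidigraph n S"
    using D unfolding in_Dns_def by simp
  have "3 \<le> cycle_len c2"
    using dcycle_len_ge_2[OF c(2)] parity(2) by (cases "cycle_len c2 = 2") auto
  then show thesis
    using that energy_Dns[OF D c \<open>c1 \<noteq> c2\<close>] Dns_cycle_lens_le[OF D c \<open>c1 \<noteq> c2\<close>]
      dcycle_len_ge_2[OF c(1)] parity dcycle_sign[OF \<open>sidigraph n S\<close> c(1)]
      dcycle_sign[OF \<open>sidigraph n S\<close> c(2)]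
    by force
qed

lemma energy_Dns_even_odd_le:
  assumes "Dns_even_odd n S"
  shows "energy n S \<le> 2 + 1 / sin (pi / (2 * real (n - 2)))"
proof -
  obtain p q sp sq where S: "energy n S = cycle_energy p sp + cycle_energy q sq"
    and pq: "even p" "odd q" "2 \<le> p" "3 \<le> q" "p + q \<le> n" and sign: "sp \<in> {1, -1}" "sq \<in> {1, -1}"
    using Dns_even_odd_energy[OF assms] .
  have q: "cycle_energy q sq = 1 / sin (pi / (2 * real q))"
    using cycle_energy_odd[OF pq(2) sign(2)] .
  show ?thesis
  proof (cases "p = 2")
    case True
    then have "cycle_energy p sp \<le> 2"
      using sign(1) cycle_energy_two_one cycle_energy_two_minus_one by auto
    moreover have "1 / sin (pi / (2 * real q)) \<le> 1 / sin (pi / (2 * real (n - 2)))"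
      using pq True by (intro csc_half_angle_mono) auto
    ultimately show ?thesis
      using S q by simp
  next
    case False
    then have "4 \<le> p"
      using pq(1,3) by presburger
    then show ?thesis
      using S q cycle_energy_even_le[OF pq(1,3) sign(1)] even_odd_csc_sum_le[OF _ pq(4,5)] by force
  qed
qed

lemma energy_Dns_even_odd_ge:
  assumes "Dns_even_odd n S"
  shows "2 \<le> energy n S"
proof -
  obtain p q sp sq where S: "energy n S = cycle_energy p sp + cycle_energy q sq"
    and q: "odd q" "3 \<le> q" and sign: "sq \<in> {1, -1}"
    using Dns_even_odd_energy[OF assms] by metis
  have "cycle_energy 3 sq \<le> cycle_energy q sq"
    using cycle_energy_odd[OF q(1) sign] cycle_energy_odd[of 3 sq] sign q csc_half_angle_mono[of 3 q]
    by simp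
  then show ?thesis
    using S cycle_energy_three[OF sign] cycle_energy_nonneg[of p sp] by simp
qed

section \<open>The extremal sidigraphs\<close>

text \<open>Vertices \<open>0, 1\<close> carry the \<open>2\<close>-cycle (arc \<open>0 \<rightarrow> 1\<close> of sign \<open>s\<close>), vertices \<open>2, \<dots>, q + 1\<close> the
  positive \<open>q\<close>-cycle closed by the arc \<open>q + 1 \<rightarrow> 2\<close>, and the path \<open>1 \<rightarrow> 2 \<rightarrow> \<dots> \<rightarrow> n - 1\<close> connects
  everything.\<close>

definition Dns_2q_adj :: "nat \<Rightarrow> nat \<Rightarrow> int \<Rightarrow> nat \<Rightarrow> nat \<Rightarrow> int" where
  "Dns_2q_adj n q s i j =
    (if i = 0 \<and> j = 1 then s
     else if (i = 1 \<and> j = 0) \<or> (1 \<le> i \<and> j = i + 1 \<and> j < n) \<or> (i = q + 1 \<and> j = 2) then 1 else 0)"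

definition long_succ :: "nat \<Rightarrow> nat \<Rightarrow> nat" where
  "long_succ q x = (if x = q + 1 then 2 else x + 1)"

text \<open>Arcs never decrease this level, so it is constant along every directed cycle.\<close>

definition arc_level :: "nat \<Rightarrow> nat \<Rightarrow> nat" where
  "arc_level q i = (if i \<le> 1 then 0 else if i \<le> q + 1 then 1 else i)"

locale Dns_2q_witness =
  fixes n q :: nat and s :: int
  assumes q3: "3 \<le> q" and qn: "q + 2 \<le> n" and s: "s \<in> {1, -1}"
begin

abbreviation "A \<equiv> Dns_2q_adj n q s"

definition short_cycle :: "(nat \<times> nat) set" where "short_cycle = cycle_arcs [0, 1]"
definition long_cycle :: "(nat \<times> nat) set" where "long_cycle = cycle_arcs [2..<q+2]"

lemma arc_cases:
  assumes "A i j \<noteq> 0"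
  shows "(i = 0 \<and> j = 1) \<or> (i = 1 \<and> j = 0) \<or> (1 \<le> i \<and> j = i + 1 \<and> j < n) \<or> (i = q + 1 \<and> j = 2)"
  using assms unfolding Dns_2q_adj_def by (auto split: if_splits)

lemma sidigraph_witness: "sidigraph n A"
  unfolding sidigraph_def
proof (rule conjI; intro allI impI)
  fix i j
  show "A i j \<in> {-1, 0, 1}"
    using s unfolding Dns_2q_adj_def by auto
next
  fix i j
  assume "A i j \<noteq> 0"
  then show "i < n \<and> j < n \<and> i \<noteq> j"
    using arc_cases[of i j] q3 qn by auto
qed

lemma arc_level_mono:
  assumes "A i j \<noteq> 0"
  shows "arc_level q i \<le> arc_level q j"
proof -
  have "arc_level q i \<le> arc_level q j" if "i \<le> j"
    using that q3 unfolding arc_level_def by simp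
  then show ?thesis
    using arc_cases[OF assms] q3 by (auto simp: arc_level_def)
qed

lemma arc_level_eq:
  assumes "A i j \<noteq> 0" "arc_level q i = arc_level q j"
  shows "(arc_level q i = 0 \<and> i \<le> 1 \<and> j \<le> 1)
    \<or> (arc_level q i = 1 \<and> 2 \<le> i \<and> i \<le> q + 1 \<and> j = long_succ q i)"
proof -
  from arc_cases[OF assms(1)] consider "i \<le> 1" "j \<le> 1" | "2 \<le> i" "i \<le> q" "j = i + 1"
    | "i = q + 1" "j = 2" | "i = q + 1" "j = q + 2" | "q + 2 \<le> i" "j = i + 1" | "i = 1" "j = 2"
    by linarith
  then show ?thesis
    using assms(2) q3 by cases (simp_all add: arc_level_def long_succ_def)
qed

lemma short_cycle_eq: "short_cycle = {(0, 1), (1, 0)}"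
proof -
  have "{i. i < length [0, 1::nat]} = {0, 1}"
    by auto
  then show ?thesis
    unfolding short_cycle_def cycle_arcs_def Setcompr_eq_image[of _ "{i. i < _}", simplified] by simp
qed

lemma long_cycle_eq: "long_cycle = (\<lambda>x. (x, long_succ q x)) ` {2..q+1}"
proof -
  define bl where "bl = [2..<q+2]"
  have len: "length bl = q" and "distinct bl" and "set bl = {2..q+1}"
    unfolding bl_def by auto
  have nth: "bl ! k = 2 + k" if "k < q" for k
    unfolding bl_def using that by (simp del: upt_Suc)
  have "cycle_of_list bl x = long_succ q x" if "x \<in> {2..q+1}" for x
  proof -
    define i where "i = x - 2"
    have i: "i < q" "x = 2 + i"
      using that unfolding i_def by auto
    have next_vertex: "cycle_of_list bl x = bl ! ((i + 1) mod q)"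
      using cycle_of_list_nth[OF \<open>distinct bl\<close>, of i] i len nth by simp
    show ?thesis
    proof (cases "i + 1 < q")
      case True
      then show ?thesis
        using next_vertex i nth unfolding long_succ_def by simp
    next
      case False
      then have "i + 1 = q"
        using i by simp
      then show ?thesis
        using next_vertex i nth[of 0] q3 unfolding long_succ_def by simp
    qed
  qed
  then show ?thesis
    unfolding long_cycle_def bl_def[symmetric] cycle_arcs_eq_graph[OF \<open>distinct bl\<close>] \<open>set bl = _\<close>
    by auto
qed

lemma long_succ_arc: "x \<in> {2..q+1} \<Longrightarrow> A x (long_succ q x) = 1"
  unfolding Dns_2q_adj_def long_succ_def using qn by auto

lemma cycle_list_short: "cycle_list A [0, 1]"
  unfolding cycle_list_def using s by (auto simp: less_Suc_eq Dns_2q_adj_def)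

lemma cycle_list_long: "cycle_list A [2..<q+2]"
proof -
  have "A x (cycle_of_list [2..<q+2] x) \<noteq> 0" if "x \<in> set [2..<q+2]" for x
  proof -
    have "(x, cycle_of_list [2..<q+2] x) \<in> long_cycle"
      unfolding long_cycle_def cycle_arcs_eq_graph[OF distinct_upt] using that by (rule imageI)
    then obtain y where "y \<in> {2..q+1}" "x = y" "cycle_of_list [2..<q+2] x = long_succ q y"
      unfolding long_cycle_eq by blast
    then show ?thesis
      using long_succ_arc by simp
  qed
  moreover have "length [2..<q+2] \<ge> 2"
    using q3 by simp
  ultimately show ?thesis
    using cycle_list_iff_arcs[OF distinct_upt] by blast
qed

lemma card_short_cycle: "card short_cycle = 2"
  unfolding short_cycle_eq by simp

lemma card_long_cycle: "card long_cycle = q"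
  unfolding long_cycle_def using card_cycle_arcs[OF distinct_upt, of 2 "q+2"] by (simp del: upt_Suc)

lemma long_succ_iterate:
  assumes closed: "\<forall>x\<in>X. long_succ q x \<in> X" and "y \<in> X" "y + k \<le> q + 1"
  shows "y + k \<in> X"
  using assms(3)
proof (induction k)
  case (Suc k)
  then have "y + k \<in> X" and "long_succ q (y + k) = y + Suc k"
    unfolding long_succ_def by simp_all
  then show ?case
    using closed by metis
qed (use assms(2) in simp)

lemma long_succ_closed:
  assumes sub: "X \<subseteq> {2..q+1}" and closed: "\<forall>x\<in>X. long_succ q x \<in> X" and "x0 \<in> X"
  shows "X = {2..q+1}"
proof
  have "x0 \<le> q + 1"
    using sub \<open>x0 \<in> X\<close> by auto
  then have "q + 1 \<in> X"
    using long_succ_iterate[OF closed \<open>x0 \<in> X\<close>, of "q + 1 - x0"] by simp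
  then have "2 \<in> X"
    using closed unfolding long_succ_def by force
  show "{2..q+1} \<subseteq> X"
  proof
    fix z
    assume "z \<in> {2..q+1}"
    then have "2 + (z - 2) = z"
      by auto
    then show "z \<in> X"
      using long_succ_iterate[OF closed \<open>2 \<in> X\<close>, of "z - 2"] \<open>z \<in> {2..q+1}\<close> by simp
  qed
qed (rule sub)


lemma cycle_list_witness_cases:
  assumes "cycle_list A vs"
  shows "(\<forall>x\<in>set vs. x \<le> 1)
    \<or> (\<forall>i<length vs. 2 \<le> vs ! i \<and> vs ! i \<le> q + 1 \<and> vs ! ((i + 1) mod length vs) = long_succ q (vs ! i))"
proof -
  let ?L = "length vs"
  have "?L \<ge> 2" and arc: "\<forall>i<?L. A (vs ! i) (vs ! ((i + 1) mod ?L)) \<noteq> 0"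
    using assms unfolding cycle_list_def by auto
  then have const: "\<forall>i<?L. arc_level q (vs ! i) = arc_level q (vs ! 0)"
    using arc_level_mono by (intro cycle_list_level_const) auto
  have "(i + 1) mod ?L < ?L" for i
    using \<open>?L \<ge> 2\<close> by (intro mod_less_divisor) linarith
  then have step: "(arc_level q (vs ! 0) = 0 \<and> vs ! i \<le> 1)
      \<or> (arc_level q (vs ! 0) = 1 \<and> 2 \<le> vs ! i \<and> vs ! i \<le> q + 1
          \<and> vs ! ((i + 1) mod ?L) = long_succ q (vs ! i))" if "i < ?L" for i
    using arc_level_eq[OF arc[rule_format, OF that]] const that by fastforce
  show ?thesis
  proof (cases "arc_level q (vs ! 0) = 0")
    case True
    then show ?thesis
      using step by (auto simp: in_set_conv_nth)
  next
    case False
    then show ?thesis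
      using step by auto
  qed
qed

lemma cycle_arcs_low:
  assumes "cycle_list A vs" "\<forall>x\<in>set vs. x \<le> 1"
  shows "cycle_arcs vs = short_cycle"
proof (rule card_seteq)
  have "distinct vs" "length vs \<ge> 2"
    using assms(1) unfolding cycle_list_def by auto
  have "x \<le> 1" "cycle_of_list vs x \<le> 1" "cycle_of_list vs x \<noteq> x" if "x \<in> set vs" for x
    using that assms(2) permutes_in_image[OF cycle_permutes[of vs], of x]
      cycle_of_list_moves[OF \<open>distinct vs\<close> \<open>length vs \<ge> 2\<close>] by auto
  then show "cycle_arcs vs \<subseteq> short_cycle"
    unfolding cycle_arcs_eq_graph[OF \<open>distinct vs\<close>] short_cycle_eq by (auto simp: le_Suc_eq)
  show "card short_cycle \<le> card (cycle_arcs vs)"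
    using \<open>distinct vs\<close> \<open>length vs \<ge> 2\<close> by (simp add: card_short_cycle card_cycle_arcs)
qed (simp add: short_cycle_eq)

lemma cycle_arcs_high:
  assumes "cycle_list A vs"
    and high: "\<forall>i<length vs. 2 \<le> vs ! i \<and> vs ! i \<le> q + 1 \<and> vs ! ((i + 1) mod length vs) = long_succ q (vs ! i)"
  shows "cycle_arcs vs = long_cycle"
proof -
  have "distinct vs" "length vs \<ge> 2"
    using assms(1) unfolding cycle_list_def by auto
  have next_vertex: "cycle_of_list vs x = long_succ q x" if "x \<in> set vs" for x
    using that high cycle_of_list_nth[OF \<open>distinct vs\<close>] by (auto simp: in_set_conv_nth)
  have "set vs \<subseteq> {2..q+1}"
    using high by (auto simp: in_set_conv_nth)
  moreover have "\<forall>x\<in>set vs. long_succ q x \<in> set vs"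
    using next_vertex permutes_in_image[OF cycle_permutes[of vs]] by metis
  moreover have "vs ! 0 \<in> set vs"
    using \<open>length vs \<ge> 2\<close> by (intro nth_mem) linarith
  ultimately have "set vs = {2..q+1}"
    by (rule long_succ_closed)
  then show ?thesis
    unfolding cycle_arcs_eq_graph[OF \<open>distinct vs\<close>] long_cycle_eq using next_vertex by auto
qed

lemma dcycles_witness: "dcycles A = {short_cycle, long_cycle}"
proof
  show "dcycles A \<subseteq> {short_cycle, long_cycle}"
    unfolding dcycles_def using cycle_list_witness_cases cycle_arcs_low cycle_arcs_high by blast
  show "{short_cycle, long_cycle} \<subseteq> dcycles A"
    unfolding dcycles_def short_cycle_def long_cycle_def using cycle_list_short cycle_list_long by auto
qed

lemma short_ne_long: "short_cycle \<noteq> long_cycle"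
  using card_short_cycle card_long_cycle q3 by auto

lemma cycle_sign_short: "cycle_sign A short_cycle = s"
  unfolding cycle_sign_def short_cycle_eq by (simp add: Dns_2q_adj_def)

lemma cycle_sign_long: "cycle_sign A long_cycle = 1"
  unfolding cycle_sign_def long_cycle_eq by (rule prod.neutral) (auto simp: long_succ_arc)

lemma underlying_connected_witness: "underlying_connected n A"
proof -
  define R where "R = {(u, v). A u v \<noteq> 0 \<or> A v u \<noteq> 0}"
  have "sym R"
    unfolding R_def sym_def by auto
  have "(i, i + 1) \<in> R" if "i + 1 < n" for i
    using that s unfolding R_def Dns_2q_adj_def by auto
  then have from_0: "(0, i) \<in> R\<^sup>*" if "i < n" for i
    using that by (induction i) (auto intro: rtrancl_into_rtrancl)
  then have "(i, 0) \<in> R\<^sup>*" if "i < n" for i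
    using that symD[OF sym_rtrancl[OF \<open>sym R\<close>]] by blast
  then show ?thesis
    unfolding underlying_connected_def R_def[symmetric] using from_0 by (meson rtrancl_trans)
qed

lemma in_Dns_witness: "in_Dns n A"
  unfolding in_Dns_def
  using sidigraph_witness underlying_connected_witness dcycles_witness short_ne_long
  by (auto simp: cycle_verts_def short_cycle_eq long_cycle_eq image_image)

lemma Dns_pq_witness: "Dns_pq n s 2 1 q A"
  unfolding Dns_pq_def cycle_len_def
  using in_Dns_witness dcycles_witness short_ne_long card_short_cycle card_long_cycle
    cycle_sign_short cycle_sign_long by blast

lemma Dns_even_odd_witness: "odd q \<Longrightarrow> Dns_even_odd n A"
  unfolding Dns_even_odd_def cycle_len_def
  using in_Dns_witness dcycles_witness card_short_cycle card_long_cycle by auto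

end

lemma energy_Dns_pq_two_odd:
  assumes "Dns_pq n 1 2 1 q T" "odd q"
  shows "energy n T = 2 + 1 / sin (pi / (2 * real q))"
  using energy_Dns_pq[OF assms(1)] cycle_energy_two_one cycle_energy_odd[OF assms(2)] by simp

lemma energy_Dns_pq_neg_two_three:
  assumes "Dns_pq n (-1) 2 1 3 T"
  shows "energy n T = 2"
  using energy_Dns_pq[OF assms] cycle_energy_two_minus_one cycle_energy_three by simp

theorem theorem3p27:
  fixes n :: nat
  assumes "n > 5"
  shows "(odd n \<longrightarrow>
            (\<exists>T. Dns_even_odd n T \<and> Dns_pq n 1 2 1 (n - 2) T) \<and>
            (\<forall>S T. Dns_even_odd n S \<and> Dns_pq n 1 2 1 (n - 2) T \<longrightarrow>
                   energy n S \<le> energy n T)) \<and>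
         ((\<exists>T. Dns_even_odd n T \<and> Dns_pq n (-1) 2 1 3 T) \<and>
          (\<forall>S T. Dns_even_odd n S \<and> Dns_pq n (-1) 2 1 3 T \<longrightarrow>
                 energy n T \<le> energy n S))"
proof (intro conjI impI allI)
  assume "odd n"
  then have "odd (n - 2)"
    using assms by simp
  interpret maximal: Dns_2q_witness n "n - 2" 1
    using assms by unfold_locales auto
  show "\<exists>T. Dns_even_odd n T \<and> Dns_pq n 1 2 1 (n - 2) T"
    using maximal.Dns_even_odd_witness[OF \<open>odd (n - 2)\<close>] maximal.Dns_pq_witness by blast
next
  fix S T
  assume "odd n" and ST: "Dns_even_odd n S \<and> Dns_pq n 1 2 1 (n - 2) T"
  then have "odd (n - 2)"
    using assms by simp
  with ST show "energy n S \<le> energy n T"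
    using energy_Dns_even_odd_le[of n S] energy_Dns_pq_two_odd[of n "n - 2" T] by simp
next
  interpret minimal: Dns_2q_witness n 3 "-1"
    using assms by unfold_locales auto
  show "\<exists>T. Dns_even_odd n T \<and> Dns_pq n (-1) 2 1 3 T"
    using minimal.Dns_even_odd_witness minimal.Dns_pq_witness by auto
next
  fix S T
  assume "Dns_even_odd n S \<and> Dns_pq n (-1) 2 1 3 T"
  then show "energy n T \<le> energy n S"
    using energy_Dns_even_odd_ge energy_Dns_pq_neg_two_three by simp
qed

end
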